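(* Let $\pi$ be a uniformly random permutation of $\{1,\dots,n\}$ and $\mathbf{s}=\sqrt{12/(n^2-1)}\,\big(\pi(1)-\tfrac{n+1}2,\dots,\pi(n)-\tfrac{n+1}2\big)^\top$, and let $\boldsymbol{\Sigma}=\frac{n}{n-1}\big(\mathbf{I}_n-\frac1n\mathbf{1}_n\mathbf{1}_n^\top\big)$. Then for all non-random symmetric $n\times n$ matrices $\mathbf{A},\mathbf{B}$, $$\mathbb{E}\,\mathbf{s}^\top\mathbf{A}\mathbf{s}=\operatorname{tr}(\boldsymbol{\Sigma}\mathbf{A}),$$ $$\operatorname{cov}(\mathbf{s}^\top\mathbf{A}\mathbf{s},\mathbf{s}^\top\mathbf{B}\mathbf{s})=2\operatorname{tr}(\mathbf{A}\mathbf{B})-\frac65\operatorname{tr}(\mathbf{A}\circ\mathbf{B})-\frac{4}{5n}\operatorname{tr}(\mathbf{A})\operatorname{tr}(\mathbf{B})+O(1)\|\mathbf{A}\|\|\mathbf{B}\|,$$ where $O(1)$ denotes a quantity bounded in absolute value by a constant not depending on $n,\mathbf{A},\mathbf{B}$.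
   Context: $\circ$ denotes the Hadamard (entrywise) product, $\|\cdot\|$ the spectral norm, and $\mathbf{1}_n$ the all-ones vector. *)

theory Defs
  imports "HOL-Probability.Probability"
begin

text \<open>Matrices of size n are represented as functions nat => nat => real,
  only the entries with indices in {1..n} being relevant.\<close>

definition sym_mat :: "nat \<Rightarrow> (nat \<Rightarrow> nat \<Rightarrow> real) \<Rightarrow> bool" where
  "sym_mat n A \<longleftrightarrow> (\<forall>i\<in>{1..n}. \<forall>j\<in>{1..n}. A i j = A j i)"

definition mtrace :: "nat \<Rightarrow> (nat \<Rightarrow> nat \<Rightarrow> real) \<Rightarrow> real" where
  "mtrace n A = (\<Sum>i=1..n. A i i)"

definition mmult :: "nat \<Rightarrow> (nat \<Rightarrow> nat \<Rightarrow> real) \<Rightarrow> (nat \<Rightarrow> nat \<Rightarrow> real) \<Rightarrow> (nat \<Rightarrow> nat \<Rightarrow> real)" where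
  "mmult n A B = (\<lambda>i j. \<Sum>k=1..n. A i k * B k j)"

definition hadamard :: "(nat \<Rightarrow> nat \<Rightarrow> real) \<Rightarrow> (nat \<Rightarrow> nat \<Rightarrow> real) \<Rightarrow> (nat \<Rightarrow> nat \<Rightarrow> real)" where
  "hadamard A B = (\<lambda>i j. A i j * B i j)"

definition spec_norm :: "nat \<Rightarrow> (nat \<Rightarrow> nat \<Rightarrow> real) \<Rightarrow> real" where
  "spec_norm n A = Sup {sqrt (\<Sum>i=1..n. (\<Sum>j=1..n. A i j * x j)\<^sup>2) | x :: nat \<Rightarrow> real.
        (\<Sum>i=1..n. (x i)\<^sup>2) = 1}"

definition Sigma_mat :: "nat \<Rightarrow> (nat \<Rightarrow> nat \<Rightarrow> real)" where
  "Sigma_mat n = (\<lambda>i j. real n / (real n - 1) * ((if i = j then 1 else 0) - 1 / real n))"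

definition svec :: "nat \<Rightarrow> (nat \<Rightarrow> nat) \<Rightarrow> nat \<Rightarrow> real" where
  "svec n p i = sqrt (12 / ((real n)\<^sup>2 - 1)) * (real (p i) - (real n + 1) / 2)"

definition qform :: "nat \<Rightarrow> (nat \<Rightarrow> nat \<Rightarrow> real) \<Rightarrow> (nat \<Rightarrow> real) \<Rightarrow> real" where
  "qform n A x = (\<Sum>i=1..n. \<Sum>j=1..n. x i * A i j * x j)"

definition unif_perm :: "nat \<Rightarrow> (nat \<Rightarrow> nat) pmf" where
  "unif_perm n = pmf_of_set {p. p permutes {1..n}}"

definition perm_cov :: "nat \<Rightarrow> ((nat \<Rightarrow> nat) \<Rightarrow> real) \<Rightarrow> ((nat \<Rightarrow> nat) \<Rightarrow> real) \<Rightarrow> real" where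
  "perm_cov n X Y =
     measure_pmf.expectation (unif_perm n) (\<lambda>p. X p * Y p)
     - measure_pmf.expectation (unif_perm n) X * measure_pmf.expectation (unif_perm n) Y"

end

theory Submission
  imports Defs "HOL-Real_Asymp.Real_Asymp"
begin

text \<open>
  With centred ranks c(m) = m - (n+1)/2 one has s_i = sqrt(12/(n^2-1)) c(pi(i)), so the mean and the
  covariance of the quadratic forms are linear in the joint moments of order two and four of
  c(pi(1)), ..., c(pi(n)). By exchangeability these moments depend only on which indices coincide,
  and the identities sum_l c(pi(l)) = 0, sum_l c(pi(l))^2 = n(n^2-1)/12 and
  sum_l c(pi(l))^4 = n(n^2-1)(3n^2-7)/240 determine them exactly. Expanding the fourth moment in
  Kronecker deltas turns E[(s'As)(s'Bs)] into a combination of seven contractions of A and B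
  (products of traces and entry sums, 1'AB1, tr(AB), tr(A o B), ...), each at most n or n^2 times
  ||A|| ||B|| by Cauchy-Schwarz. Their rational coefficients differ from those of the main term
  2 tr(AB) - 6/5 tr(A o B) - 4/(5n) tr(A) tr(B) by O(1/n^2), resp. O(1/n), which is exactly what
  the remainder O(1) ||A|| ||B|| allows.
\<close>

section \<open>Centred ranks under a uniform random permutation\<close>

lemma sum_shifted_nat: "(\<Sum>m=1..n. real m + a) = real n * (real n + 1) / 2 + real n * a"
  by (induction n) (simp_all add: field_simps)

lemma sum_shifted_nat_power2:
  "(\<Sum>m=1..n. (real m + a)^2)
     = real n * (real n + 1) * (2 * real n + 1) / 6 + a * real n * (real n + 1) + real n * a^2"
  by (induction n) (simp_all add: field_simps power2_eq_square)

lemma sum_shifted_nat_power4: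
  "(\<Sum>m=1..n. (real m + a)^4)
     = real n * (real n + 1) * (2 * real n + 1) * (3 * (real n)^2 + 3 * real n - 1) / 30
       + a * (real n * (real n + 1))^2 + a^2 * real n * (real n + 1) * (2 * real n + 1)
       + 2 * a^3 * real n * (real n + 1) + real n * a^4"
  by (induction n) (simp_all add: field_simps power2_eq_square power3_eq_cube power4_eq_xxxx)

definition centred_rank :: "nat \<Rightarrow> nat \<Rightarrow> real" where
  "centred_rank n m = real m - (real n + 1) / 2"

lemma centred_rank_eq_shift: "centred_rank n = (\<lambda>m. real m + (- (real n + 1) / 2))"
  by (auto simp: centred_rank_def fun_eq_iff field_simps)

lemma sum_centred_rank: "(\<Sum>m=1..n. centred_rank n m) = 0"
  unfolding centred_rank_eq_shift sum_shifted_nat by (simp add: field_simps)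

lemma sum_centred_rank_power2: "(\<Sum>m=1..n. (centred_rank n m)^2) = real n * ((real n)^2 - 1) / 12"
  unfolding centred_rank_eq_shift sum_shifted_nat_power2 by (simp add: field_simps power2_eq_square)

lemma sum_centred_rank_power4:
  "(\<Sum>m=1..n. (centred_rank n m)^4) = real n * ((real n)^2 - 1) * (3 * (real n)^2 - 7) / 240"
  unfolding centred_rank_eq_shift sum_shifted_nat_power4
  by (simp add: field_simps power2_eq_square power3_eq_cube power4_eq_xxxx)

lemma expectation_unif_perm:
  fixes f :: "(nat \<Rightarrow> nat) \<Rightarrow> real"
  shows "measure_pmf.expectation (unif_perm n) f = (\<Sum>p | p permutes {1..n}. f p) / fact n"
proof -
  have "{p. p permutes {1..n}} \<noteq> {}" using permutes_id by blast
  moreover have "finite {p. p permutes {1..n}}" by (simp add: finite_permutations)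
  ultimately show ?thesis
    unfolding unif_perm_def by (simp add: integral_pmf_of_set card_permutations)
qed

lemma expectation_unif_perm_cong:
  fixes f g :: "(nat \<Rightarrow> nat) \<Rightarrow> real"
  assumes "\<And>p. p permutes {1..n} \<Longrightarrow> f p = g p"
  shows "measure_pmf.expectation (unif_perm n) f = measure_pmf.expectation (unif_perm n) g"
  unfolding expectation_unif_perm using assms by (intro arg_cong2[where f = "(/)"] sum.cong) auto

lemma expectation_unif_perm_sum:
  fixes f :: "'a \<Rightarrow> (nat \<Rightarrow> nat) \<Rightarrow> real"
  shows "measure_pmf.expectation (unif_perm n) (\<lambda>p. \<Sum>l\<in>L. f l p)
    = (\<Sum>l\<in>L. measure_pmf.expectation (unif_perm n) (f l))"
  unfolding expectation_unif_perm sum_divide_distrib by (rule sum.swap)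

lemma expectation_unif_perm_compose:
  fixes f :: "(nat \<Rightarrow> nat) \<Rightarrow> real"
  assumes "s permutes {1..n}"
  shows "measure_pmf.expectation (unif_perm n) (\<lambda>p. f (p \<circ> s)) = measure_pmf.expectation (unif_perm n) f"
  unfolding expectation_unif_perm using sum_permutations_compose_right[OF assms, of f] by simp

lemma sum_centred_rank_permutes:
  assumes "p permutes {1..n}"
  shows "(\<Sum>l=1..n. centred_rank n (p l)) = 0"
    and "(\<Sum>l=1..n. centred_rank n (p l) ^ 2) = real n * ((real n)^2 - 1) / 12"
    and "(\<Sum>l=1..n. centred_rank n (p l) ^ 4) = real n * ((real n)^2 - 1) * (3 * (real n)^2 - 7) / 240"
  using sum.permute[OF assms, of "centred_rank n"] sum.permute[OF assms, of "\<lambda>m. centred_rank n m ^ 2"]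
    sum.permute[OF assms, of "\<lambda>m. centred_rank n m ^ 4"]
    sum_centred_rank[of n] sum_centred_rank_power2[of n] sum_centred_rank_power4[of n]
  by simp_all

section \<open>Joint moments of centred ranks\<close>

definition rank_moment2 :: "nat \<Rightarrow> nat \<Rightarrow> nat \<Rightarrow> real" where
  "rank_moment2 n i j =
     measure_pmf.expectation (unif_perm n) (\<lambda>p. centred_rank n (p i) * centred_rank n (p j))"

definition rank_moment4 :: "nat \<Rightarrow> nat \<Rightarrow> nat \<Rightarrow> nat \<Rightarrow> nat \<Rightarrow> real" where
  "rank_moment4 n i j k l = measure_pmf.expectation (unif_perm n)
     (\<lambda>p. centred_rank n (p i) * centred_rank n (p j) * centred_rank n (p k) * centred_rank n (p l))"

lemma rank_moment2_permute:
  assumes "s permutes {1..n}"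
  shows "rank_moment2 n (s i) (s j) = rank_moment2 n i j"
  using expectation_unif_perm_compose[OF assms, of "\<lambda>p. centred_rank n (p i) * centred_rank n (p j)"]
  by (simp add: rank_moment2_def)

lemma rank_moment4_permute:
  assumes "s permutes {1..n}"
  shows "rank_moment4 n (s i) (s j) (s k) (s l) = rank_moment4 n i j k l"
  using expectation_unif_perm_compose[OF assms, of "\<lambda>p. centred_rank n (p i) * centred_rank n (p j)
    * centred_rank n (p k) * centred_rank n (p l)"]
  by (simp add: rank_moment4_def)

lemma sum_rank_moment2: "(\<Sum>l=1..n. rank_moment2 n i l) = 0"
proof -
  have "(\<Sum>l=1..n. rank_moment2 n i l) = measure_pmf.expectation (unif_perm n)
      (\<lambda>p. centred_rank n (p i) * (\<Sum>l=1..n. centred_rank n (p l)))"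
    by (simp add: rank_moment2_def expectation_unif_perm_sum sum_distrib_left)
  also have "\<dots> = measure_pmf.expectation (unif_perm n) (\<lambda>_. 0)"
    by (rule expectation_unif_perm_cong) (use sum_centred_rank_permutes in simp)
  finally show ?thesis by simp
qed

lemma sum_rank_moment2_diag: "(\<Sum>l=1..n. rank_moment2 n l l) = real n * ((real n)^2 - 1) / 12"
proof -
  have "(\<Sum>l=1..n. rank_moment2 n l l) = measure_pmf.expectation (unif_perm n)
      (\<lambda>p. \<Sum>l=1..n. centred_rank n (p l) ^ 2)"
    by (simp add: rank_moment2_def expectation_unif_perm_sum power2_eq_square)
  also have "\<dots> = measure_pmf.expectation (unif_perm n) (\<lambda>_. real n * ((real n)^2 - 1) / 12)"
    by (rule expectation_unif_perm_cong) (use sum_centred_rank_permutes in simp)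
  finally show ?thesis by simp
qed

lemma sum_rank_moment4: "(\<Sum>l=1..n. rank_moment4 n i j k l) = 0"
proof -
  have "(\<Sum>l=1..n. rank_moment4 n i j k l) = measure_pmf.expectation (unif_perm n)
      (\<lambda>p. centred_rank n (p i) * centred_rank n (p j) * centred_rank n (p k)
         * (\<Sum>l=1..n. centred_rank n (p l)))"
    by (simp add: rank_moment4_def expectation_unif_perm_sum sum_distrib_left)
  also have "\<dots> = measure_pmf.expectation (unif_perm n) (\<lambda>_. 0)"
    by (rule expectation_unif_perm_cong) (use sum_centred_rank_permutes in simp)
  finally show ?thesis by simp
qed

lemma sum_rank_moment4_pairs:
  "(\<Sum>l=1..n. rank_moment4 n i i l l) = real n * ((real n)^2 - 1) / 12 * rank_moment2 n i i"
proof -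
  have "(\<Sum>l=1..n. rank_moment4 n i i l l) = measure_pmf.expectation (unif_perm n)
      (\<lambda>p. centred_rank n (p i) * centred_rank n (p i) * (\<Sum>l=1..n. centred_rank n (p l) ^ 2))"
    by (simp add: rank_moment4_def expectation_unif_perm_sum sum_distrib_left power2_eq_square mult.assoc)
  also have "\<dots> = measure_pmf.expectation (unif_perm n)
      (\<lambda>p. real n * ((real n)^2 - 1) / 12 * (centred_rank n (p i) * centred_rank n (p i)))"
    by (rule expectation_unif_perm_cong) (use sum_centred_rank_permutes in simp)
  finally show ?thesis by (simp add: rank_moment2_def)
qed

lemma sum_rank_moment4_diag:
  "(\<Sum>l=1..n. rank_moment4 n l l l l) = real n * ((real n)^2 - 1) * (3 * (real n)^2 - 7) / 240"
proof -
  have "(\<Sum>l=1..n. rank_moment4 n l l l l) = measure_pmf.expectation (unif_perm n)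
      (\<lambda>p. \<Sum>l=1..n. centred_rank n (p l) ^ 4)"
    by (simp add: rank_moment4_def expectation_unif_perm_sum power4_eq_xxxx)
  also have "\<dots> = measure_pmf.expectation (unif_perm n)
      (\<lambda>_. real n * ((real n)^2 - 1) * (3 * (real n)^2 - 7) / 240)"
    by (rule expectation_unif_perm_cong) (use sum_centred_rank_permutes in simp)
  finally show ?thesis by simp
qed

lemma sum_const_outside_subset:
  fixes f :: "'a \<Rightarrow> real"
  assumes "finite S" "K \<subseteq> S" "a \<in> S - K" "\<And>l. l \<in> S - K \<Longrightarrow> f l = f a"
  shows "sum f S = sum f K + (real (card S) - real (card K)) * f a"
proof -
  have "sum f S = sum f (S - K) + sum f K" using sum.subset_diff[OF assms(2,1)] by simp
  also have "sum f (S - K) = sum (\<lambda>_. f a) (S - K)" using assms(4) by (rule sum.cong[OF refl])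
  also have "\<dots> = (real (card S) - real (card K)) * f a"
    using card_Diff_subset[OF finite_subset[OF assms(2,1)] assms(2)] card_mono[OF assms(1,2)]
    by (simp add: of_nat_diff)
  finally show ?thesis by simp
qed

lemma le_of_distinct_in_atLeastAtMost:
  fixes i j k l n :: nat
  shows "i \<in> {1..n} \<Longrightarrow> j \<in> {1..n} \<Longrightarrow> i \<noteq> j \<Longrightarrow> 2 \<le> n"
  "i \<in> {1..n} \<Longrightarrow> j \<in> {1..n} \<Longrightarrow> k \<in> {1..n} \<Longrightarrow> distinct [i, j, k] \<Longrightarrow> 3 \<le> n"
  "i \<in> {1..n} \<Longrightarrow> j \<in> {1..n} \<Longrightarrow> k \<in> {1..n} \<Longrightarrow> l \<in> {1..n} \<Longrightarrow> distinct [i, j, k, l] \<Longrightarrow> 4 \<le> n"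
  using card_mono[of "{1..n}" "{i, j}"] card_mono[of "{1..n}" "{i, j, k}"]
    card_mono[of "{1..n}" "{i, j, k, l}"]
  by auto

text \<open>The values of the moments on each coincidence pattern of the indices, named by the
  multiplicities of the distinct indices: e.g. mu4_31 n is E[c(pi(i))^3 c(pi(j))] for i, j distinct.\<close>

definition mu2_2 :: "nat \<Rightarrow> real" where "mu2_2 n = ((real n)^2 - 1) / 12"

definition mu2_11 :: "nat \<Rightarrow> real" where "mu2_11 n = - (real n + 1) / 12"

definition mu4_4 :: "nat \<Rightarrow> real" where
  "mu4_4 n = ((real n)^2 - 1) * (3 * (real n)^2 - 7) / 240"

definition mu4_31 :: "nat \<Rightarrow> real" where
  "mu4_31 n = - (real n + 1) * (3 * (real n)^2 - 7) / 240"

definition mu4_22 :: "nat \<Rightarrow> real" where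
  "mu4_22 n = (real n + 1) * (5 * (real n)^3 - 9 * (real n)^2 - 5 * real n + 21) / 720"

definition mu4_211 :: "nat \<Rightarrow> real" where
  "mu4_211 n = - (real n + 1) * (real n - 3) * (5 * real n + 7) / 720"

definition mu4_1111 :: "nat \<Rightarrow> real" where
  "mu4_1111 n = (real n + 1) * (5 * real n + 7) / 240"

lemma rank_moment2_diag:
  assumes "i \<in> {1..n}"
  shows "rank_moment2 n i i = mu2_2 n"
proof -
  have "rank_moment2 n l l = rank_moment2 n i i" if "l \<in> {1..n}" for l
    using rank_moment2_permute[OF permutes_swap_id[OF assms that], of i i] by simp
  then have "real n * rank_moment2 n i i = real n * mu2_2 n"
    using sum_rank_moment2_diag[of n] by (simp add: mu2_2_def)
  moreover have "real n > 0" using assms by simp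
  ultimately show ?thesis by simp
qed

lemma rank_moment2_offdiag:
  assumes "i \<in> {1..n}" "j \<in> {1..n}" "i \<noteq> j"
  shows "rank_moment2 n i j = mu2_11 n"
proof -
  have const: "rank_moment2 n i l = rank_moment2 n i j" if "l \<in> {1..n} - {i}" for l
  proof -
    have "Transposition.transpose j l i = i" "Transposition.transpose j l j = l" using assms that by auto
    then show ?thesis using rank_moment2_permute[OF permutes_swap_id[OF assms(2), of l], of i j] that by simp
  qed
  have "0 = (\<Sum>l=1..n. rank_moment2 n i l)" using sum_rank_moment2[of n i] by simp
  also have "\<dots> = rank_moment2 n i i + (real n - 1) * rank_moment2 n i j"
    using sum_const_outside_subset[where S = "{1..n}" and K = "{i}" and a = j and f = "rank_moment2 n i",
        OF _ _ _ const] assms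
    by simp
  finally have "0 = rank_moment2 n i i + (real n - 1) * rank_moment2 n i j" .
  moreover have "real n - 1 \<noteq> 0" using le_of_distinct_in_atLeastAtMost(1)[OF assms] by simp
  ultimately have "rank_moment2 n i j = - mu2_2 n / (real n - 1)"
    using rank_moment2_diag[OF assms(1)] by (simp add: field_simps)
  also have "\<dots> = mu2_11 n"
    using \<open>real n - 1 \<noteq> 0\<close> by (simp add: mu2_2_def mu2_11_def field_simps power2_eq_square)
  finally show ?thesis .
qed

lemma rank_moment2_delta:
  assumes "i \<in> {1..n}" "j \<in> {1..n}"
  shows "rank_moment2 n i j = mu2_11 n + (mu2_2 n - mu2_11 n) * of_bool (i = j)"
  using rank_moment2_diag[OF assms(1)] rank_moment2_offdiag[OF assms] by (cases "i = j") auto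

lemma rank_moment4_4:
  assumes "i \<in> {1..n}"
  shows "rank_moment4 n i i i i = mu4_4 n"
proof -
  have "rank_moment4 n l l l l = rank_moment4 n i i i i" if "l \<in> {1..n}" for l
    using rank_moment4_permute[OF permutes_swap_id[OF assms that], of i i i i] by simp
  then have "real n * rank_moment4 n i i i i = real n * mu4_4 n"
    using sum_rank_moment4_diag[of n] by (simp add: mu4_4_def)
  moreover have "real n > 0" using assms by simp
  ultimately show ?thesis by simp
qed

lemma rank_moment4_swap_last:
  assumes "l \<in> {1..n} - {i, j, k}" "l' \<in> {1..n} - {i, j, k}"
  shows "rank_moment4 n i j k l = rank_moment4 n i j k l'"
proof -
  have "Transposition.transpose l' l i = i" "Transposition.transpose l' l j = j"
    "Transposition.transpose l' l k = k" "Transposition.transpose l' l l' = l" using assms by auto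
  then show ?thesis using rank_moment4_permute[OF permutes_swap_id[of l' _ l], of n i j k l'] assms by simp
qed

lemma rank_moment4_31:
  assumes "i \<in> {1..n}" "j \<in> {1..n}" "i \<noteq> j"
  shows "rank_moment4 n i i i j = mu4_31 n" "rank_moment4 n i i j i = mu4_31 n"
    "rank_moment4 n i j i i = mu4_31 n" "rank_moment4 n j i i i = mu4_31 n"
proof -
  have const: "rank_moment4 n i i i l = rank_moment4 n i i i j" if "l \<in> {1..n} - {i}" for l
    using rank_moment4_swap_last[of l n i i i j] that assms by simp
  have "0 = (\<Sum>l=1..n. rank_moment4 n i i i l)" using sum_rank_moment4[of n i i i] by simp
  also have "\<dots> = mu4_4 n + (real n - 1) * rank_moment4 n i i i j"
    using sum_const_outside_subset[where S = "{1..n}" and K = "{i}" and a = j and f = "rank_moment4 n i i i",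
        OF _ _ _ const]
      rank_moment4_4[OF assms(1)] assms by simp
  finally have "0 = mu4_4 n + (real n - 1) * rank_moment4 n i i i j" .
  moreover have "real n - 1 \<noteq> 0" using le_of_distinct_in_atLeastAtMost(1)[OF assms] by simp
  ultimately have "rank_moment4 n i i i j = - mu4_4 n / (real n - 1)" by (simp add: field_simps)
  also have "\<dots> = mu4_31 n"
    using \<open>real n - 1 \<noteq> 0\<close> by (simp add: mu4_4_def mu4_31_def field_simps power2_eq_square)
  finally show "rank_moment4 n i i i j = mu4_31 n" .
  then show "rank_moment4 n i i j i = mu4_31 n" "rank_moment4 n i j i i = mu4_31 n"
    "rank_moment4 n j i i i = mu4_31 n" by (simp_all add: rank_moment4_def ac_simps)
qed

lemma rank_moment4_22:
  assumes "i \<in> {1..n}" "j \<in> {1..n}" "i \<noteq> j"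
  shows "rank_moment4 n i i j j = mu4_22 n" "rank_moment4 n i j i j = mu4_22 n"
    "rank_moment4 n i j j i = mu4_22 n"
proof -
  have const: "rank_moment4 n i i l l = rank_moment4 n i i j j" if "l \<in> {1..n} - {i}" for l
  proof -
    have "Transposition.transpose j l i = i" "Transposition.transpose j l j = l" using assms that by auto
    then show ?thesis
      using rank_moment4_permute[OF permutes_swap_id[OF assms(2), of l], of i i j j] that by simp
  qed
  have "real n * ((real n)^2 - 1) / 12 * mu2_2 n = (\<Sum>l=1..n. rank_moment4 n i i l l)"
    using sum_rank_moment4_pairs[of n i] rank_moment2_diag[OF assms(1)] by simp
  also have "\<dots> = mu4_4 n + (real n - 1) * rank_moment4 n i i j j"
    using sum_const_outside_subset[where S = "{1..n}" and K = "{i}" and a = j and f = "\<lambda>l. rank_moment4 n i i l l",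
        OF _ _ _ const]
      rank_moment4_4[OF assms(1)] assms by simp
  finally have "real n * ((real n)^2 - 1) / 12 * mu2_2 n = mu4_4 n + (real n - 1) * rank_moment4 n i i j j" .
  moreover have "real n - 1 \<noteq> 0" using le_of_distinct_in_atLeastAtMost(1)[OF assms] by simp
  ultimately have "rank_moment4 n i i j j = (real n * ((real n)^2 - 1) / 12 * mu2_2 n - mu4_4 n) / (real n - 1)"
    by (simp add: field_simps)
  also have "\<dots> = mu4_22 n"
    using \<open>real n - 1 \<noteq> 0\<close>
    by (simp add: mu2_2_def mu4_4_def mu4_22_def field_simps power2_eq_square power3_eq_cube)
  finally show "rank_moment4 n i i j j = mu4_22 n" .
  then show "rank_moment4 n i j i j = mu4_22 n" "rank_moment4 n i j j i = mu4_22 n"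
    by (simp_all add: rank_moment4_def ac_simps)
qed

lemma rank_moment4_211:
  assumes "i \<in> {1..n}" "j \<in> {1..n}" "k \<in> {1..n}" "distinct [i, j, k]"
  shows "rank_moment4 n i i j k = mu4_211 n" "rank_moment4 n i j i k = mu4_211 n"
    "rank_moment4 n i j k i = mu4_211 n" "rank_moment4 n j i i k = mu4_211 n"
    "rank_moment4 n j i k i = mu4_211 n" "rank_moment4 n j k i i = mu4_211 n"
proof -
  have const: "rank_moment4 n i i j l = rank_moment4 n i i j k" if "l \<in> {1..n} - {i, j}" for l
    using rank_moment4_swap_last[of l n i i j k] that assms by simp
  have "0 = (\<Sum>l=1..n. rank_moment4 n i i j l)" using sum_rank_moment4[of n i i j] by simp
  also have "\<dots> = mu4_31 n + mu4_22 n + (real n - 2) * rank_moment4 n i i j k"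
    using sum_const_outside_subset[where S = "{1..n}" and K = "{i, j}" and a = k and f = "rank_moment4 n i i j",
        OF _ _ _ const]
      rank_moment4_31(2)[of i n j] rank_moment4_22(1)[of i n j] assms by simp
  finally have "0 = mu4_31 n + mu4_22 n + (real n - 2) * rank_moment4 n i i j k" .
  moreover have "real n - 2 \<noteq> 0" using le_of_distinct_in_atLeastAtMost(2)[OF assms] by simp
  ultimately have "rank_moment4 n i i j k = - (mu4_31 n + mu4_22 n) / (real n - 2)"
    by (simp add: field_simps)
  also have "\<dots> = mu4_211 n"
    using \<open>real n - 2 \<noteq> 0\<close>
    by (simp add: mu4_31_def mu4_22_def mu4_211_def field_simps power2_eq_square power3_eq_cube)
  finally show "rank_moment4 n i i j k = mu4_211 n" .
  then show "rank_moment4 n i j i k = mu4_211 n" "rank_moment4 n i j k i = mu4_211 n"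
    "rank_moment4 n j i i k = mu4_211 n" "rank_moment4 n j i k i = mu4_211 n"
    "rank_moment4 n j k i i = mu4_211 n" by (simp_all add: rank_moment4_def ac_simps)
qed

lemma rank_moment4_1111:
  assumes "i \<in> {1..n}" "j \<in> {1..n}" "k \<in> {1..n}" "l \<in> {1..n}" "distinct [i, j, k, l]"
  shows "rank_moment4 n i j k l = mu4_1111 n"
proof -
  have const: "rank_moment4 n i j k m = rank_moment4 n i j k l" if "m \<in> {1..n} - {i, j, k}" for m
    using rank_moment4_swap_last[of m n i j k l] that assms by simp
  have "0 = (\<Sum>m=1..n. rank_moment4 n i j k m)" using sum_rank_moment4[of n i j k] by simp
  also have "\<dots> = 3 * mu4_211 n + (real n - 3) * rank_moment4 n i j k l"
    using sum_const_outside_subset[where S = "{1..n}" and K = "{i, j, k}" and a = l and f = "rank_moment4 n i j k",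
        OF _ _ _ const]
      rank_moment4_211(3)[of i n j k] rank_moment4_211(5)[of j n i k] rank_moment4_211(6)[of k n i j] assms
    by simp
  finally have "0 = 3 * mu4_211 n + (real n - 3) * rank_moment4 n i j k l" .
  moreover have "real n - 3 \<noteq> 0" using le_of_distinct_in_atLeastAtMost(3)[OF assms] by simp
  ultimately have "rank_moment4 n i j k l = - 3 * mu4_211 n / (real n - 3)" by (simp add: field_simps)
  also have "\<dots> = mu4_1111 n"
    using \<open>real n - 3 \<noteq> 0\<close> by (simp add: mu4_211_def mu4_1111_def field_simps)
  finally show ?thesis .
qed

lemma index_partition4:
  obtains "i = j" "j = k" "k = l"
  | "i = j" "j = k" "k \<noteq> l" | "i = j" "j = l" "k \<noteq> l" | "i = k" "k = l" "j \<noteq> k" | "j = k" "k = l" "i \<noteq> j"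
  | "i = j" "k = l" "i \<noteq> k" | "i = k" "j = l" "i \<noteq> j" | "i = l" "j = k" "i \<noteq> j"
  | "i = j" "distinct [i, k, l]" | "i = k" "distinct [i, j, l]" | "i = l" "distinct [i, j, k]"
  | "j = k" "distinct [i, j, l]" | "j = l" "distinct [i, j, k]" | "k = l" "distinct [i, j, k]"
  | "distinct [i, j, k, l]"
  by (cases "i = j"; cases "i = k"; cases "i = l"; cases "j = k"; cases "j = l"; cases "k = l") auto

text \<open>The coefficients arise by Moebius inversion over the set partitions of the four index
  positions.\<close>

lemma rank_moment4_delta:
  assumes "i \<in> {1..n}" "j \<in> {1..n}" "k \<in> {1..n}" "l \<in> {1..n}"
  shows "rank_moment4 n i j k l = mu4_1111 n
     + (mu4_211 n - mu4_1111 n) * (of_bool (i = j) + of_bool (i = k) + of_bool (i = l)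
         + of_bool (j = k) + of_bool (j = l) + of_bool (k = l))
     + (mu4_22 n - 2 * mu4_211 n + mu4_1111 n)
         * (of_bool (i = j) * of_bool (k = l) + of_bool (i = k) * of_bool (j = l)
            + of_bool (i = l) * of_bool (j = k))
     + (mu4_31 n - 3 * mu4_211 n + 2 * mu4_1111 n)
         * (of_bool (i = j) * of_bool (j = k) + of_bool (i = j) * of_bool (j = l)
            + of_bool (i = k) * of_bool (k = l) + of_bool (j = k) * of_bool (k = l))
     + (mu4_4 n - 3 * mu4_22 n - 4 * mu4_31 n + 12 * mu4_211 n - 6 * mu4_1111 n)
         * (of_bool (i = j) * of_bool (j = k) * of_bool (k = l))"
  by (rule index_partition4[of i j k l])
    (use assms in \<open>simp_all add: rank_moment4_4 rank_moment4_31 rank_moment4_22 rank_moment4_211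
      rank_moment4_1111\<close>)

section \<open>Contracting two matrices against a four-index array\<close>

definition entry_sum :: "nat \<Rightarrow> (nat \<Rightarrow> nat \<Rightarrow> real) \<Rightarrow> real" where
  "entry_sum n A = (\<Sum>i=1..n. \<Sum>j=1..n. A i j)"

definition row_sum :: "nat \<Rightarrow> (nat \<Rightarrow> nat \<Rightarrow> real) \<Rightarrow> nat \<Rightarrow> real" where
  "row_sum n A i = (\<Sum>j=1..n. A i j)"

definition contract4 ::
  "nat \<Rightarrow> (nat \<Rightarrow> nat \<Rightarrow> real) \<Rightarrow> (nat \<Rightarrow> nat \<Rightarrow> real) \<Rightarrow> (nat \<Rightarrow> nat \<Rightarrow> nat \<Rightarrow> nat \<Rightarrow> real) \<Rightarrow> real"
  where "contract4 n A B f = (\<Sum>i=1..n. \<Sum>j=1..n. \<Sum>k=1..n. \<Sum>l=1..n. A i j * B k l * f i j k l)"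

lemma contract4_add:
  "contract4 n A B (\<lambda>i j k l. f i j k l + g i j k l) = contract4 n A B f + contract4 n A B g"
  by (simp add: contract4_def distrib_left sum.distrib)

lemma contract4_cmult: "contract4 n A B (\<lambda>i j k l. c * f i j k l) = c * contract4 n A B f"
  by (simp add: contract4_def sum_distrib_left mult_ac)

lemma contract4_cong:
  assumes "\<And>i j k l. i \<in> {1..n} \<Longrightarrow> j \<in> {1..n} \<Longrightarrow> k \<in> {1..n} \<Longrightarrow> l \<in> {1..n} \<Longrightarrow> f i j k l = g i j k l"
  shows "contract4 n A B f = contract4 n A B g"
  unfolding contract4_def using assms by (intro sum.cong refl) auto

lemma contract4_transpose_left:
  assumes "sym_mat n A"
  shows "contract4 n A B f = contract4 n A B (\<lambda>i j k l. f j i k l)"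
proof -
  have "contract4 n A B f = (\<Sum>j=1..n. \<Sum>i=1..n. \<Sum>k=1..n. \<Sum>l=1..n. A i j * B k l * f i j k l)"
    unfolding contract4_def by (rule sum.swap)
  also have "\<dots> = contract4 n A B (\<lambda>i j k l. f j i k l)"
    unfolding contract4_def using assms unfolding sym_mat_def by (intro sum.cong refl) auto
  finally show ?thesis .
qed

lemma contract4_transpose_right:
  assumes "sym_mat n B"
  shows "contract4 n A B f = contract4 n A B (\<lambda>i j k l. f i j l k)"
proof -
  have "contract4 n A B f = (\<Sum>i=1..n. \<Sum>j=1..n. \<Sum>l=1..n. \<Sum>k=1..n. A i j * B k l * f i j k l)"
    unfolding contract4_def by (subst (3) sum.swap) (rule refl)
  also have "\<dots> = contract4 n A B (\<lambda>i j k l. f i j l k)"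
    unfolding contract4_def using assms unfolding sym_mat_def by (intro sum.cong refl) auto
  finally show ?thesis .
qed

lemma contract4_swap: "contract4 n A B f = contract4 n B A (\<lambda>i j k l. f k l i j)"
proof -
  have "contract4 n A B f = (\<Sum>k=1..n. \<Sum>l=1..n. \<Sum>i=1..n. \<Sum>j=1..n. A i j * B k l * f i j k l)"
    unfolding contract4_def
    by (subst (2) sum.swap, subst sum.swap, subst (3) sum.swap, subst (2) sum.swap) (rule refl)
  then show ?thesis unfolding contract4_def by (simp add: mult_ac)
qed

lemma sum_product_nested:
  fixes a :: "'a \<Rightarrow> 'b \<Rightarrow> real"
  shows "(\<Sum>i\<in>I. \<Sum>j\<in>J. a i j) * (\<Sum>k\<in>K. \<Sum>l\<in>L. b k l) = (\<Sum>i\<in>I. \<Sum>j\<in>J. \<Sum>k\<in>K. \<Sum>l\<in>L. a i j * b k l)"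
    and "(\<Sum>i\<in>I. a' i) * (\<Sum>k\<in>K. \<Sum>l\<in>L. b k l) = (\<Sum>i\<in>I. \<Sum>k\<in>K. \<Sum>l\<in>L. a' i * b k l)"
    and "(\<Sum>i\<in>I. \<Sum>j\<in>J. a i j) * (\<Sum>k\<in>K. b' k) = (\<Sum>i\<in>I. \<Sum>j\<in>J. \<Sum>k\<in>K. a i j * b' k)"
  by (simp_all add: sum_distrib_right) (simp_all add: sum_distrib_left)

lemma mult_delta_right: "x * (if P then y else 0) = (if P then x * y else (0::real))"
  by simp

lemma sum_if_const_cond: "(\<Sum>x\<in>S. if P then f x else 0) = (if P then sum f S else 0)"
  by simp

lemmas contract4_simps = contract4_def of_bool_def mult_delta_right sum_if_const_cond sum.delta sum.delta'
  sum_product_nested sum_product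

lemma contract4_const: "contract4 n A B (\<lambda>i j k l. c) = c * (entry_sum n A * entry_sum n B)"
  using contract4_cmult[of n A B c "\<lambda>i j k l. 1"]
  unfolding entry_sum_def by (simp add: contract4_simps)

lemma contract4_delta_ij: "contract4 n A B (\<lambda>i j k l. of_bool (i = j)) = mtrace n A * entry_sum n B"
  unfolding entry_sum_def mtrace_def by (simp add: contract4_simps)

lemma contract4_delta_kl: "contract4 n A B (\<lambda>i j k l. of_bool (k = l)) = entry_sum n A * mtrace n B"
  unfolding entry_sum_def mtrace_def by (simp add: contract4_simps)

lemma contract4_delta_ik:
  "contract4 n A B (\<lambda>i j k l. of_bool (i = k)) = (\<Sum>i=1..n. row_sum n A i * row_sum n B i)"
  unfolding row_sum_def by (simp add: contract4_simps)

lemma contract4_delta_ij_kl: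
  "contract4 n A B (\<lambda>i j k l. of_bool (i = j) * of_bool (k = l)) = mtrace n A * mtrace n B"
  unfolding mtrace_def by (simp add: contract4_simps)

lemma contract4_delta_il_jk:
  "contract4 n A B (\<lambda>i j k l. of_bool (i = l) * of_bool (j = k)) = mtrace n (mmult n A B)"
  unfolding mtrace_def mmult_def by (simp add: contract4_simps)

lemma contract4_delta_ij_jk:
  "contract4 n A B (\<lambda>i j k l. of_bool (i = j) * of_bool (j = k)) = (\<Sum>i=1..n. A i i * row_sum n B i)"
  unfolding row_sum_def by (simp add: contract4_simps sum_distrib_left)

lemma contract4_delta_ij_jk_kl:
  "contract4 n A B (\<lambda>i j k l. of_bool (i = j) * of_bool (j = k) * of_bool (k = l)) = mtrace n (hadamard A B)"
  unfolding mtrace_def hadamard_def by (simp add: contract4_simps)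

lemma contract4_delta_poly:
  assumes A: "sym_mat n A" and B: "sym_mat n B"
  shows "contract4 n A B (\<lambda>i j k l. d
      + c * (of_bool (i = j) + of_bool (i = k) + of_bool (i = l)
             + of_bool (j = k) + of_bool (j = l) + of_bool (k = l))
      + b * (of_bool (i = j) * of_bool (k = l) + of_bool (i = k) * of_bool (j = l)
             + of_bool (i = l) * of_bool (j = k))
      + g * (of_bool (i = j) * of_bool (j = k) + of_bool (i = j) * of_bool (j = l)
             + of_bool (i = k) * of_bool (k = l) + of_bool (j = k) * of_bool (k = l))
      + e * (of_bool (i = j) * of_bool (j = k) * of_bool (k = l)))
    = d * (entry_sum n A * entry_sum n B)
      + c * (mtrace n A * entry_sum n B + entry_sum n A * mtrace n B
             + 4 * (\<Sum>i=1..n. row_sum n A i * row_sum n B i))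
      + b * (mtrace n A * mtrace n B + 2 * mtrace n (mmult n A B))
      + 2 * g * ((\<Sum>i=1..n. A i i * row_sum n B i) + (\<Sum>i=1..n. B i i * row_sum n A i))
      + e * mtrace n (hadamard A B)"
proof -
  note transpose_left = contract4_transpose_left[OF A] and transpose_right = contract4_transpose_right[OF B]
  have il: "contract4 n A B (\<lambda>i j k l. of_bool (i = l)) = (\<Sum>i=1..n. row_sum n A i * row_sum n B i)"
    using transpose_right[where f = "\<lambda>i j k l. of_bool (i = l)"] contract4_delta_ik by simp
  have jk: "contract4 n A B (\<lambda>i j k l. of_bool (j = k)) = (\<Sum>i=1..n. row_sum n A i * row_sum n B i)"
    using transpose_left[where f = "\<lambda>i j k l. of_bool (j = k)"] contract4_delta_ik by simp
  have jl: "contract4 n A B (\<lambda>i j k l. of_bool (j = l)) = (\<Sum>i=1..n. row_sum n A i * row_sum n B i)"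
    using transpose_left[where f = "\<lambda>i j k l. of_bool (j = l)"] il by simp
  have ik_jl: "contract4 n A B (\<lambda>i j k l. of_bool (i = k) * of_bool (j = l)) = mtrace n (mmult n A B)"
    using transpose_right[where f = "\<lambda>i j k l. of_bool (i = k) * of_bool (j = l)"] contract4_delta_il_jk by simp
  have ij_jl: "contract4 n A B (\<lambda>i j k l. of_bool (i = j) * of_bool (j = l)) = (\<Sum>i=1..n. A i i * row_sum n B i)"
    using transpose_right[where f = "\<lambda>i j k l. of_bool (i = j) * of_bool (j = l)"] contract4_delta_ij_jk by simp
  have ik_kl: "contract4 n A B (\<lambda>i j k l. of_bool (i = k) * of_bool (k = l)) = (\<Sum>i=1..n. B i i * row_sum n A i)"
  proof -
    have "contract4 n A B (\<lambda>i j k l. of_bool (i = k) * of_bool (k = l))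
        = contract4 n B A (\<lambda>i j k l. of_bool (i = j) * of_bool (j = k))"
      by (subst contract4_swap) (rule contract4_cong, auto)
    then show ?thesis using contract4_delta_ij_jk by simp
  qed
  have jk_kl: "contract4 n A B (\<lambda>i j k l. of_bool (j = k) * of_bool (k = l)) = (\<Sum>i=1..n. B i i * row_sum n A i)"
    using transpose_left[where f = "\<lambda>i j k l. of_bool (j = k) * of_bool (k = l)"] ik_kl by simp
  show ?thesis
    by (simp only: contract4_add contract4_cmult contract4_const contract4_delta_ij contract4_delta_ik
        contract4_delta_kl contract4_delta_ij_kl contract4_delta_il_jk contract4_delta_ij_jk
        contract4_delta_ij_jk_kl il jk jl ik_jl ij_jl ik_kl jk_kl)
      (simp add: algebra_simps)
qed

lemma contract4_rank_moment4:
  assumes "sym_mat n A" "sym_mat n B"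
  shows "contract4 n A B (rank_moment4 n)
    = mu4_1111 n * (entry_sum n A * entry_sum n B)
      + (mu4_211 n - mu4_1111 n) * (mtrace n A * entry_sum n B + entry_sum n A * mtrace n B
          + 4 * (\<Sum>i=1..n. row_sum n A i * row_sum n B i))
      + (mu4_22 n - 2 * mu4_211 n + mu4_1111 n) * (mtrace n A * mtrace n B + 2 * mtrace n (mmult n A B))
      + 2 * (mu4_31 n - 3 * mu4_211 n + 2 * mu4_1111 n)
          * ((\<Sum>i=1..n. A i i * row_sum n B i) + (\<Sum>i=1..n. B i i * row_sum n A i))
      + (mu4_4 n - 3 * mu4_22 n - 4 * mu4_31 n + 12 * mu4_211 n - 6 * mu4_1111 n) * mtrace n (hadamard A B)"
  unfolding contract4_delta_poly[OF assms, symmetric] by (rule contract4_cong) (rule rank_moment4_delta)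

section \<open>Spectral norm bounds\<close>

lemma abs_mult_le_mult:
  fixes p q P Q :: real
  assumes "\<bar>p\<bar> \<le> P" "\<bar>q\<bar> \<le> Q"
  shows "\<bar>p * q\<bar> \<le> P * Q"
  unfolding abs_mult using assms by (intro mult_mono) (auto intro: order.trans[OF abs_ge_zero])

definition vec_norm :: "nat \<Rightarrow> (nat \<Rightarrow> real) \<Rightarrow> real" where
  "vec_norm n x = sqrt (\<Sum>i=1..n. (x i)^2)"

definition mat_vec :: "nat \<Rightarrow> (nat \<Rightarrow> nat \<Rightarrow> real) \<Rightarrow> (nat \<Rightarrow> real) \<Rightarrow> nat \<Rightarrow> real" where
  "mat_vec n A x i = (\<Sum>j=1..n. A i j * x j)"

lemma vec_norm_nonneg: "vec_norm n x \<ge> 0"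
  by (simp add: vec_norm_def sum_nonneg)

lemma vec_norm_const_one: "vec_norm n (\<lambda>_. 1) = sqrt (real n)"
  by (simp add: vec_norm_def)

lemma abs_sum_mult_le_vec_norm: "\<bar>\<Sum>i=1..n. x i * y i\<bar> \<le> vec_norm n x * vec_norm n y"
proof -
  have "(\<Sum>i=1..n. x i * y i)^2 \<le> (\<Sum>i=1..n. (x i)^2) * (\<Sum>i=1..n. (y i)^2)"
    by (rule Cauchy_Schwarz_ineq_sum)
  then have "sqrt ((\<Sum>i=1..n. x i * y i)^2) \<le> sqrt ((\<Sum>i=1..n. (x i)^2) * (\<Sum>i=1..n. (y i)^2))"
    by (rule real_sqrt_le_mono)
  then show ?thesis by (simp add: vec_norm_def real_sqrt_mult)
qed

lemma abs_sum_mult_le_of_vec_norm_le: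
  assumes "vec_norm n x \<le> sqrt (real n) * a" "vec_norm n y \<le> sqrt (real n) * b"
  shows "\<bar>\<Sum>i=1..n. x i * y i\<bar> \<le> real n * (a * b)"
proof -
  have "\<bar>\<Sum>i=1..n. x i * y i\<bar> \<le> (sqrt (real n) * a) * (sqrt (real n) * b)"
    using abs_sum_mult_le_vec_norm mult_mono[OF assms order.trans[OF vec_norm_nonneg assms(1)] vec_norm_nonneg]
    by (rule order.trans)
  then show ?thesis by (simp add: mult_ac)
qed

lemma bdd_above_spec_norm_set:
  fixes A :: "nat \<Rightarrow> nat \<Rightarrow> real"
  shows "bdd_above {sqrt (\<Sum>i=1..n. (\<Sum>j=1..n. A i j * x j)\<^sup>2) | x. (\<Sum>i=1..n. (x i)\<^sup>2) = 1}"
proof (rule bdd_aboveI, safe)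
  fix x :: "nat \<Rightarrow> real" assume x: "(\<Sum>i=1..n. (x i)\<^sup>2) = 1"
  have "(\<Sum>j=1..n. A i j * x j)^2 \<le> (\<Sum>j=1..n. (A i j)^2)" for i
    using Cauchy_Schwarz_ineq_sum[of "A i" x "{1..n}"] x by simp
  then have "(\<Sum>i=1..n. (\<Sum>j=1..n. A i j * x j)\<^sup>2) \<le> (\<Sum>i=1..n. \<Sum>j=1..n. (A i j)^2)"
    by (intro sum_mono)
  then show "sqrt (\<Sum>i=1..n. (\<Sum>j=1..n. A i j * x j)\<^sup>2) \<le> sqrt (\<Sum>i=1..n. \<Sum>j=1..n. (A i j)^2)"
    by (rule real_sqrt_le_mono)
qed

lemma vec_norm_mat_vec_le_spec_norm:
  assumes "(\<Sum>i=1..n. (x i)\<^sup>2) = 1"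
  shows "vec_norm n (mat_vec n A x) \<le> spec_norm n A"
  unfolding spec_norm_def vec_norm_def mat_vec_def
  by (rule cSup_upper[OF _ bdd_above_spec_norm_set]) (use assms in blast)

lemma sum_power2_unit_vec: "(k::nat) \<in> {1..n} \<Longrightarrow> (\<Sum>i=1..n. (of_bool (i = k) :: real)\<^sup>2) = 1"
  by (simp add: of_bool_def if_distrib[of "\<lambda>x. x^2"] sum.delta sum.delta' cong: if_cong)

lemma spec_norm_nonneg:
  assumes "n \<ge> 1"
  shows "spec_norm n A \<ge> 0"
  using vec_norm_mat_vec_le_spec_norm[OF sum_power2_unit_vec[of 1 n]] vec_norm_nonneg assms
  by (meson atLeastAtMost_iff le_numeral_extra(4) order.trans)

lemma vec_norm_mat_vec_le:
  assumes "n \<ge> 1"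
  shows "vec_norm n (mat_vec n A x) \<le> spec_norm n A * vec_norm n x"
proof (cases "vec_norm n x = 0")
  case True
  then have "x i = 0" if "i \<in> {1..n}" for i
    using that by (simp add: vec_norm_def sum_nonneg_eq_0_iff)
  then have "vec_norm n (mat_vec n A x) = 0" by (simp add: vec_norm_def mat_vec_def)
  then show ?thesis using True by simp
next
  case False
  define s where "s = vec_norm n x"
  have "s > 0" using False vec_norm_nonneg[of n x] unfolding s_def by linarith
  have "(\<Sum>i=1..n. (x i / s)\<^sup>2) = (\<Sum>i=1..n. (x i)^2) / s^2"
    by (simp add: power_divide sum_divide_distrib)
  also have "(\<Sum>i=1..n. (x i)^2) = s^2" by (simp add: s_def vec_norm_def sum_nonneg)
  finally have "(\<Sum>i=1..n. (x i / s)\<^sup>2) = 1" using \<open>s > 0\<close> by simp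
  then have "vec_norm n (mat_vec n A (\<lambda>i. x i / s)) \<le> spec_norm n A"
    by (rule vec_norm_mat_vec_le_spec_norm)
  moreover have "vec_norm n (mat_vec n A (\<lambda>i. x i / s)) = vec_norm n (mat_vec n A x) / s"
    using \<open>s > 0\<close>
    by (simp add: vec_norm_def mat_vec_def power_divide sum_divide_distrib[symmetric] real_sqrt_divide)
  ultimately show ?thesis using \<open>s > 0\<close> by (simp add: s_def divide_le_eq mult.commute)
qed

lemma mat_vec_unit_vec: "j \<in> {1..n} \<Longrightarrow> mat_vec n A (\<lambda>m. of_bool (m = j)) = (\<lambda>i. A i j)"
  by (simp add: fun_eq_iff mat_vec_def of_bool_def if_distrib[of "\<lambda>x. _ * x"] sum.delta' cong: if_cong
     )

lemma vec_norm_column_le_spec_norm: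
  assumes "j \<in> {1..n}"
  shows "vec_norm n (\<lambda>i. A i j) \<le> spec_norm n A"
  using vec_norm_mat_vec_le_spec_norm[OF sum_power2_unit_vec[OF assms], of A] mat_vec_unit_vec[OF assms] by simp

lemma abs_entry_le_spec_norm:
  assumes "i \<in> {1..n}" "j \<in> {1..n}"
  shows "\<bar>A i j\<bar> \<le> spec_norm n A"
proof -
  have "\<bar>A i j\<bar> \<le> vec_norm n (\<lambda>i. A i j)"
    using assms(1) unfolding vec_norm_def
    by (metis (no_types, lifting) finite_atLeastAtMost member_le_sum real_sqrt_abs real_sqrt_le_mono
        zero_le_power2)
  also have "\<dots> \<le> spec_norm n A" by (rule vec_norm_column_le_spec_norm[OF assms(2)])
  finally show ?thesis .
qed

lemma vec_norm_row_sum_le: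
  assumes "n \<ge> 1"
  shows "vec_norm n (row_sum n A) \<le> sqrt (real n) * spec_norm n A"
proof -
  have "mat_vec n A (\<lambda>_. 1) = row_sum n A" by (simp add: fun_eq_iff mat_vec_def row_sum_def)
  then show ?thesis
    using vec_norm_mat_vec_le[OF assms, of A "\<lambda>_. 1"] by (simp add: vec_norm_const_one mult.commute)
qed

lemma vec_norm_diag_le:
  assumes "n \<ge> 1"
  shows "vec_norm n (\<lambda>i. A i i) \<le> sqrt (real n) * spec_norm n A"
proof -
  have "(A i i)^2 \<le> (spec_norm n A)^2" if "i \<in> {1..n}" for i
  proof -
    have "\<bar>A i i\<bar>^2 \<le> (spec_norm n A)^2"
      by (rule power_mono[OF abs_entry_le_spec_norm[OF that that] abs_ge_zero])
    then show ?thesis by simp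
  qed
  then have "(\<Sum>i=1..n. (A i i)^2) \<le> (\<Sum>i=1..n. (spec_norm n A)^2)"
    by (rule sum_mono)
  then have "vec_norm n (\<lambda>i. A i i) \<le> sqrt (real n * (spec_norm n A)^2)"
    by (simp add: vec_norm_def real_sqrt_le_mono)
  also have "\<dots> = sqrt (real n) * spec_norm n A" by (simp add: real_sqrt_mult spec_norm_nonneg[OF assms])
  finally show ?thesis .
qed

context
  fixes n :: nat
  assumes n: "n \<ge> 1"
begin

lemma abs_entry_sum_le: "\<bar>entry_sum n A\<bar> \<le> real n * spec_norm n A"
proof -
  have "entry_sum n A = (\<Sum>i=1..n. 1 * row_sum n A i)" by (simp add: entry_sum_def row_sum_def)
  then show ?thesis
    using abs_sum_mult_le_of_vec_norm_le[OF _ vec_norm_row_sum_le[OF n], of "\<lambda>_. 1" 1]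
    by (simp add: vec_norm_const_one)
qed

lemma abs_mtrace_le: "\<bar>mtrace n A\<bar> \<le> real n * spec_norm n A"
proof -
  have "mtrace n A = (\<Sum>i=1..n. 1 * A i i)" by (simp add: mtrace_def)
  then show ?thesis
    using abs_sum_mult_le_of_vec_norm_le[OF _ vec_norm_diag_le[OF n], of "\<lambda>_. 1" 1]
    by (simp add: vec_norm_const_one)
qed

lemma abs_sum_row_sum_mult_le:
  "\<bar>\<Sum>i=1..n. row_sum n A i * row_sum n B i\<bar> \<le> real n * (spec_norm n A * spec_norm n B)"
  by (rule abs_sum_mult_le_of_vec_norm_le[OF vec_norm_row_sum_le[OF n] vec_norm_row_sum_le[OF n]])

lemma abs_sum_diag_mult_row_sum_le:
  "\<bar>\<Sum>i=1..n. A i i * row_sum n B i\<bar> \<le> real n * (spec_norm n A * spec_norm n B)"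
  by (rule abs_sum_mult_le_of_vec_norm_le[OF vec_norm_diag_le[OF n] vec_norm_row_sum_le[OF n]])

lemma abs_mtrace_hadamard_le: "\<bar>mtrace n (hadamard A B)\<bar> \<le> real n * (spec_norm n A * spec_norm n B)"
  unfolding mtrace_def hadamard_def
  by (rule abs_sum_mult_le_of_vec_norm_le[OF vec_norm_diag_le[OF n] vec_norm_diag_le[OF n]])

lemma abs_mtrace_mmult_le:
  assumes "sym_mat n B"
  shows "\<bar>mtrace n (mmult n A B)\<bar> \<le> real n * (spec_norm n A * spec_norm n B)"
proof -
  have "mtrace n (mmult n A B) = (\<Sum>k=1..n. \<Sum>i=1..n. A i k * B i k)"
    unfolding mtrace_def mmult_def using assms unfolding sym_mat_def
    by (subst sum.swap) (intro sum.cong refl, auto)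
  also have "\<bar>\<dots>\<bar> \<le> (\<Sum>k=1..n. \<bar>\<Sum>i=1..n. A i k * B i k\<bar>)" by (rule sum_abs)
  also have "\<dots> \<le> (\<Sum>k=1..n. spec_norm n A * spec_norm n B)"
  proof (rule sum_mono)
    fix k assume k: "k \<in> {1..n}"
    have "\<bar>\<Sum>i=1..n. A i k * B i k\<bar> \<le> vec_norm n (\<lambda>i. A i k) * vec_norm n (\<lambda>i. B i k)"
      by (rule abs_sum_mult_le_vec_norm)
    also have "\<dots> \<le> spec_norm n A * spec_norm n B"
      by (intro mult_mono vec_norm_column_le_spec_norm k spec_norm_nonneg[OF n] vec_norm_nonneg)
    finally show "\<bar>\<Sum>i=1..n. A i k * B i k\<bar> \<le> spec_norm n A * spec_norm n B" .
  qed
  finally show ?thesis by simp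
qed

lemma abs_entry_sum_mult_le:
  "\<bar>entry_sum n A * entry_sum n B\<bar> \<le> real n ^ 2 * (spec_norm n A * spec_norm n B)"
  using abs_mult_le_mult[OF abs_entry_sum_le abs_entry_sum_le] by (simp add: power2_eq_square mult_ac)

lemma abs_mtrace_mult_le: "\<bar>mtrace n A * mtrace n B\<bar> \<le> real n ^ 2 * (spec_norm n A * spec_norm n B)"
  using abs_mult_le_mult[OF abs_mtrace_le abs_mtrace_le] by (simp add: power2_eq_square mult_ac)

lemma abs_mtrace_mult_entry_sum_le:
  "\<bar>mtrace n A * entry_sum n B + entry_sum n A * mtrace n B\<bar> \<le> 2 * real n ^ 2 * (spec_norm n A * spec_norm n B)"
  using abs_mult_le_mult[OF abs_mtrace_le abs_entry_sum_le, of A B]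
    abs_mult_le_mult[OF abs_entry_sum_le abs_mtrace_le, of A B]
  by (simp add: power2_eq_square mult_ac)

lemma abs_sum_diag_mult_row_sum_sym_le:
  "\<bar>(\<Sum>i=1..n. A i i * row_sum n B i) + (\<Sum>i=1..n. B i i * row_sum n A i)\<bar>
    \<le> 2 * real n * (spec_norm n A * spec_norm n B)"
  using abs_sum_diag_mult_row_sum_le[of A B] abs_sum_diag_mult_row_sum_le[of B A] by (simp add: mult_ac)

end

section \<open>Mean and covariance of the quadratic forms\<close>

definition rank_scale :: "nat \<Rightarrow> real" where
  "rank_scale n = 12 / ((real n)^2 - 1)"

lemma qform_svec:
  assumes "n \<ge> 1"
  shows "qform n A (svec n p)
    = rank_scale n * (\<Sum>i=1..n. \<Sum>j=1..n. A i j * (centred_rank n (p i) * centred_rank n (p j)))"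
proof -
  have "rank_scale n \<ge> 0" using assms by (simp add: rank_scale_def)
  have scale: "(sqrt (rank_scale n) * x) * a * (sqrt (rank_scale n) * y) = rank_scale n * (a * (x * y))"
    for x y a :: real
  proof -
    have "(sqrt (rank_scale n) * x) * a * (sqrt (rank_scale n) * y)
        = (sqrt (rank_scale n) * sqrt (rank_scale n)) * (a * (x * y))"
      by (simp only: mult_ac)
    then show ?thesis using \<open>rank_scale n \<ge> 0\<close> by simp
  qed
  have "svec n p = (\<lambda>i. sqrt (rank_scale n) * centred_rank n (p i))"
    by (simp add: fun_eq_iff svec_def rank_scale_def centred_rank_def)
  then show ?thesis by (simp only: qform_def scale sum_distrib_left)
qed

lemma expectation_qform_svec_moment2:
  assumes "n \<ge> 1"
  shows "measure_pmf.expectation (unif_perm n) (\<lambda>p. qform n A (svec n p))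
    = rank_scale n * (\<Sum>i=1..n. \<Sum>j=1..n. A i j * rank_moment2 n i j)"
  by (simp add: qform_svec[OF assms] expectation_unif_perm_sum rank_moment2_def)

lemma sum_mult_rank_moment2:
  "(\<Sum>i=1..n. \<Sum>j=1..n. A i j * rank_moment2 n i j)
    = mu2_11 n * entry_sum n A + (mu2_2 n - mu2_11 n) * mtrace n A"
proof -
  have "(\<Sum>i=1..n. \<Sum>j=1..n. A i j * rank_moment2 n i j)
      = (\<Sum>i=1..n. \<Sum>j=1..n. mu2_11 n * A i j + (mu2_2 n - mu2_11 n) * (A i j * of_bool (i = j)))"
    by (intro sum.cong refl) (simp add: rank_moment2_delta algebra_simps)
  also have "\<dots> = mu2_11 n * entry_sum n A + (mu2_2 n - mu2_11 n) * mtrace n A"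
    by (simp add: sum.distrib sum_distrib_left entry_sum_def mtrace_def of_bool_def if_distrib[of "\<lambda>x. _ * x"]
        sum.delta cong: if_cong)
  finally show ?thesis .
qed

lemma expectation_qform_svec:
  assumes "n \<ge> 2"
  shows "measure_pmf.expectation (unif_perm n) (\<lambda>p. qform n A (svec n p))
    = (real n * mtrace n A - entry_sum n A) / (real n - 1)"
proof -
  have "real n - 1 \<noteq> 0" "real n + 1 \<noteq> 0" using assms by auto
  have scale: "rank_scale n = 12 / ((real n - 1) * (real n + 1))"
    by (simp add: rank_scale_def power2_eq_square algebra_simps)
  have "rank_scale n * mu2_11 n = - 1 / (real n - 1)"
    unfolding scale mu2_11_def using \<open>real n - 1 \<noteq> 0\<close> \<open>real n + 1 \<noteq> 0\<close> by (simp add: divide_simps)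
  moreover have "mu2_2 n - mu2_11 n = real n * (real n + 1) / 12"
    by (simp add: mu2_2_def mu2_11_def field_simps power2_eq_square)
  then have "rank_scale n * (mu2_2 n - mu2_11 n) = real n / (real n - 1)"
    unfolding scale using \<open>real n - 1 \<noteq> 0\<close> \<open>real n + 1 \<noteq> 0\<close> by (simp add: divide_simps)
  moreover have "n \<ge> 1" using assms by simp
  then have "measure_pmf.expectation (unif_perm n) (\<lambda>p. qform n A (svec n p))
      = rank_scale n * (mu2_11 n * entry_sum n A + (mu2_2 n - mu2_11 n) * mtrace n A)"
    by (simp only: expectation_qform_svec_moment2 sum_mult_rank_moment2)
  ultimately show ?thesis by (simp add: distrib_left diff_divide_distrib flip: mult.assoc)
qed

lemma mtrace_Sigma_mat:
  assumes "n \<ge> 2"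
  shows "mtrace n (mmult n (Sigma_mat n) A) = (real n * mtrace n A - entry_sum n A) / (real n - 1)"
proof -
  have "real n / (real n - 1) * (1 / real n) = 1 / (real n - 1)" using assms by simp
  then have Sigma: "Sigma_mat n i k = real n / (real n - 1) * of_bool (i = k) - 1 / (real n - 1)" for i k
    by (simp add: Sigma_mat_def right_diff_distrib)
  have "mtrace n (mmult n (Sigma_mat n) A)
      = (\<Sum>i=1..n. \<Sum>k=1..n. real n / (real n - 1) * (of_bool (i = k) * A k i) - 1 / (real n - 1) * A k i)"
    unfolding mtrace_def mmult_def Sigma by (simp only: left_diff_distrib mult.assoc)
  also have "\<dots> = real n / (real n - 1) * (\<Sum>i=1..n. \<Sum>k=1..n. of_bool (i = k) * A k i)
        - 1 / (real n - 1) * (\<Sum>i=1..n. \<Sum>k=1..n. A k i)"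
    by (simp only: sum_subtractf sum_distrib_left)
  also have "(\<Sum>i=1..n. \<Sum>k=1..n. of_bool (i = k) * A k i) = mtrace n A"
    by (simp add: mtrace_def of_bool_def if_distrib[of "\<lambda>x. x * _"] sum.delta cong: if_cong)
  also have "(\<Sum>i=1..n. \<Sum>k=1..n. A k i) = entry_sum n A"
    unfolding entry_sum_def by (rule sum.swap)
  finally show ?thesis by (simp add: diff_divide_distrib)
qed

lemma expectation_qform_svec_mult:
  assumes "n \<ge> 1"
  shows "measure_pmf.expectation (unif_perm n) (\<lambda>p. qform n A (svec n p) * qform n B (svec n p))
    = rank_scale n ^ 2 * contract4 n A B (rank_moment4 n)"
proof -
  have "qform n A (svec n p) * qform n B (svec n p) = rank_scale n ^ 2 *
      (\<Sum>i=1..n. \<Sum>j=1..n. \<Sum>k=1..n. \<Sum>l=1..n. A i j * B k l *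
        (centred_rank n (p i) * centred_rank n (p j) * centred_rank n (p k) * centred_rank n (p l)))" for p
    by (simp add: qform_svec[OF assms] sum_product_nested power2_eq_square mult_ac)
  then show ?thesis by (simp add: expectation_unif_perm_sum contract4_def rank_moment4_def)
qed

lemma perm_cov_qform_svec:
  assumes "n \<ge> 2"
  shows "perm_cov n (\<lambda>p. qform n A (svec n p)) (\<lambda>p. qform n B (svec n p))
    = rank_scale n ^ 2 * contract4 n A B (rank_moment4 n)
      - (real n * mtrace n A - entry_sum n A) / (real n - 1)
        * ((real n * mtrace n B - entry_sum n B) / (real n - 1))"
  using assms by (simp add: perm_cov_def expectation_qform_svec_mult expectation_qform_svec)

lemma bounded_of_bigo_1:
  fixes f :: "nat \<Rightarrow> real"
  assumes "f \<in> O(\<lambda>_. 1)"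
  shows "\<exists>C. \<forall>n. f n \<le> C"
proof -
  from assms obtain c where "eventually (\<lambda>n. \<bar>f n\<bar> \<le> c) sequentially"
    by (elim landau_o.bigE) simp
  then have "Bseq f"
    unfolding Bfun_def by (intro exI[of _ "max c 1"]) (auto elim: eventually_mono)
  then obtain K where "\<forall>n. \<bar>f n\<bar> \<le> K" unfolding Bseq_def by auto
  then show ?thesis by (meson abs_le_D1)
qed

text \<open>The seven coefficients are the differences between the exact coefficients of the
  contraction terms in the covariance and those of the main term, each weighted by the growth,
  n or n^2, of its contraction term.\<close>

definition cov_remainder_weight :: "nat \<Rightarrow> real" where
  "cov_remainder_weight n =
    (let x = real n; r = rank_scale n ^ 2;
         c = mu4_211 n - mu4_1111 n;
         b = mu4_22 n - 2 * mu4_211 n + mu4_1111 n;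
         g = mu4_31 n - 3 * mu4_211 n + 2 * mu4_1111 n;
         e = mu4_4 n - 3 * mu4_22 n - 4 * mu4_31 n + 12 * mu4_211 n - 6 * mu4_1111 n
     in \<bar>r * mu4_1111 n - 1 / (x - 1)^2\<bar> * x^2 + \<bar>r * c + x / (x - 1)^2\<bar> * (2 * x^2)
        + \<bar>4 * r * c\<bar> * x + \<bar>r * b - x^2 / (x - 1)^2 + 4 / (5 * x)\<bar> * x^2 + \<bar>2 * r * b - 2\<bar> * x
        + \<bar>2 * r * g\<bar> * (2 * x) + \<bar>r * e + 6 / 5\<bar> * x)"

lemma cov_remainder_weight_bigo: "cov_remainder_weight \<in> O(\<lambda>_. 1)"
  unfolding cov_remainder_weight_def Let_def rank_scale_def
    mu4_4_def mu4_31_def mu4_22_def mu4_211_def mu4_1111_def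
  by real_asymp

lemma cov_remainder_le:
  fixes oA oB tA tB U T5 T6 T7 a :: real
  assumes "\<bar>oA * oB\<bar> \<le> real n ^ 2 * a" "\<bar>tA * oB + oA * tB\<bar> \<le> 2 * real n ^ 2 * a"
    "\<bar>U\<bar> \<le> real n * a" "\<bar>tA * tB\<bar> \<le> real n ^ 2 * a" "\<bar>T5\<bar> \<le> real n * a"
    "\<bar>T6\<bar> \<le> 2 * real n * a" "\<bar>T7\<bar> \<le> real n * a"
  shows "\<bar>rank_scale n ^ 2 * (mu4_1111 n * (oA * oB)
        + (mu4_211 n - mu4_1111 n) * (tA * oB + oA * tB + 4 * U)
        + (mu4_22 n - 2 * mu4_211 n + mu4_1111 n) * (tA * tB + 2 * T5)
        + 2 * (mu4_31 n - 3 * mu4_211 n + 2 * mu4_1111 n) * T6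
        + (mu4_4 n - 3 * mu4_22 n - 4 * mu4_31 n + 12 * mu4_211 n - 6 * mu4_1111 n) * T7)
      - (real n * tA - oA) / (real n - 1) * ((real n * tB - oB) / (real n - 1))
      - (2 * T5 - 6/5 * T7 - 4 / (5 * real n) * tA * tB)\<bar>
    \<le> cov_remainder_weight n * a"
proof -
  define x r c b g e where "x = real n" and "r = rank_scale n ^ 2"
    and "c = mu4_211 n - mu4_1111 n" and "b = mu4_22 n - 2 * mu4_211 n + mu4_1111 n"
    and "g = mu4_31 n - 3 * mu4_211 n + 2 * mu4_1111 n"
    and "e = mu4_4 n - 3 * mu4_22 n - 4 * mu4_31 n + 12 * mu4_211 n - 6 * mu4_1111 n"
  have "(x * tA - oA) / (x - 1) * ((x * tB - oB) / (x - 1))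
      = (x^2 * (tA * tB) - x * (tA * oB + oA * tB) + oA * oB) / (x - 1)^2"
    by (simp add: power2_eq_square algebra_simps)
  then have remainder: "r * (mu4_1111 n * (oA * oB) + c * (tA * oB + oA * tB + 4 * U) + b * (tA * tB + 2 * T5)
        + 2 * g * T6 + e * T7) - (x * tA - oA) / (x - 1) * ((x * tB - oB) / (x - 1))
        - (2 * T5 - 6/5 * T7 - 4 / (5 * x) * tA * tB)
    = (r * mu4_1111 n - 1 / (x - 1)^2) * (oA * oB) + (r * c + x / (x - 1)^2) * (tA * oB + oA * tB)
      + (4 * r * c) * U + (r * b - x^2 / (x - 1)^2 + 4 / (5 * x)) * (tA * tB) + (2 * r * b - 2) * T5
      + (2 * r * g) * T6 + (r * e + 6 / 5) * T7"
    by (simp add: diff_divide_distrib add_divide_distrib algebra_simps)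
  have weight: "cov_remainder_weight n * a = \<bar>r * mu4_1111 n - 1 / (x - 1)^2\<bar> * (x^2 * a)
      + \<bar>r * c + x / (x - 1)^2\<bar> * (2 * x^2 * a) + \<bar>4 * r * c\<bar> * (x * a)
      + \<bar>r * b - x^2 / (x - 1)^2 + 4 / (5 * x)\<bar> * (x^2 * a) + \<bar>2 * r * b - 2\<bar> * (x * a)
      + \<bar>2 * r * g\<bar> * (2 * x * a) + \<bar>r * e + 6 / 5\<bar> * (x * a)"
    unfolding cov_remainder_weight_def Let_def x_def r_def c_def b_def g_def e_def
    by (simp add: algebra_simps)
  have scale: "\<bar>k * X\<bar> \<le> \<bar>k\<bar> * t" if "\<bar>X\<bar> \<le> t" for k X t :: real
    using abs_mult_le_mult[OF order.refl that] .
  have triangle: "\<bar>y1 + y2 + y3 + y4 + y5 + y6 + y7\<bar> \<le> w1 + w2 + w3 + w4 + w5 + w6 + w7"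
    if "\<bar>y1\<bar> \<le> w1" "\<bar>y2\<bar> \<le> w2" "\<bar>y3\<bar> \<le> w3" "\<bar>y4\<bar> \<le> w4" "\<bar>y5\<bar> \<le> w5"
      "\<bar>y6\<bar> \<le> w6" "\<bar>y7\<bar> \<le> w7" for y1 y2 y3 y4 y5 y6 y7 w1 w2 w3 w4 w5 w6 w7 :: real
    using that unfolding abs_le_iff by linarith
  show ?thesis
    unfolding remainder[unfolded x_def r_def c_def b_def g_def e_def]
      weight[unfolded x_def r_def c_def b_def g_def e_def]
    by (rule triangle; rule scale; rule assms)
qed

lemma perm_cov_qform_svec_remainder:
  assumes n: "n \<ge> 2" and A: "sym_mat n A" and B: "sym_mat n B"
  shows "\<bar>perm_cov n (\<lambda>p. qform n A (svec n p)) (\<lambda>p. qform n B (svec n p))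
      - (2 * mtrace n (mmult n A B) - 6/5 * mtrace n (hadamard A B) - 4 / (5 * real n) * mtrace n A * mtrace n B)\<bar>
    \<le> cov_remainder_weight n * (spec_norm n A * spec_norm n B)"
proof -
  have n1: "n \<ge> 1" using n by simp
  show ?thesis
    unfolding perm_cov_qform_svec[OF n] contract4_rank_moment4[OF A B]
    by (rule cov_remainder_le[OF abs_entry_sum_mult_le[OF n1] abs_mtrace_mult_entry_sum_le[OF n1]
          abs_sum_row_sum_mult_le[OF n1] abs_mtrace_mult_le[OF n1] abs_mtrace_mmult_le[OF n1 B]
          abs_sum_diag_mult_row_sum_sym_le[OF n1] abs_mtrace_hadamard_le[OF n1]])
qed

theorem lemma5:
  "\<exists>C::real. \<forall>(n::nat) (A::nat \<Rightarrow> nat \<Rightarrow> real) (B::nat \<Rightarrow> nat \<Rightarrow> real).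
     n \<ge> 2 \<longrightarrow> sym_mat n A \<longrightarrow> sym_mat n B \<longrightarrow>
       measure_pmf.expectation (unif_perm n) (\<lambda>p. qform n A (svec n p))
         = mtrace n (mmult n (Sigma_mat n) A)
     \<and> \<bar>perm_cov n (\<lambda>p. qform n A (svec n p)) (\<lambda>p. qform n B (svec n p))
         - (2 * mtrace n (mmult n A B) - 6/5 * mtrace n (hadamard A B)
            - 4 / (5 * real n) * mtrace n A * mtrace n B)\<bar>
         \<le> C * spec_norm n A * spec_norm n B"
proof -
  obtain C where C: "\<And>n. cov_remainder_weight n \<le> C"
    using bounded_of_bigo_1[OF cov_remainder_weight_bigo] by blast
  show ?thesis
  proof (intro exI[of _ C] allI impI conjI)
    fix n :: nat and A B :: "nat \<Rightarrow> nat \<Rightarrow> real"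
    assume n: "n \<ge> 2" and A: "sym_mat n A" and B: "sym_mat n B"
    show "measure_pmf.expectation (unif_perm n) (\<lambda>p. qform n A (svec n p)) = mtrace n (mmult n (Sigma_mat n) A)"
      using expectation_qform_svec[OF n] mtrace_Sigma_mat[OF n] by simp
    have "spec_norm n A * spec_norm n B \<ge> 0" using spec_norm_nonneg n by simp
    with C have "cov_remainder_weight n * (spec_norm n A * spec_norm n B) \<le> C * (spec_norm n A * spec_norm n B)"
      by (rule mult_right_mono)
    then show "\<bar>perm_cov n (\<lambda>p. qform n A (svec n p)) (\<lambda>p. qform n B (svec n p))
         - (2 * mtrace n (mmult n A B) - 6/5 * mtrace n (hadamard A B)
            - 4 / (5 * real n) * mtrace n A * mtrace n B)\<bar>
         \<le> C * spec_norm n A * spec_norm n B"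
      using perm_cov_qform_svec_remainder[OF n A B] by (simp add: mult.assoc)
  qed
qed

end
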